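(* Let $X_1\in\mathbb{B}^2\setminus\{0\}$ and $c=\rho_{\mathbb{B}^2}(0,X_1)$. Let $M_0$ be one of the two points of $L_{0X_1}(0)\cap S^1$. For $k\ge1$, given $X_1,\dots,X_k$ on the line $L(0,X_1)$, let $M_k$ be the point of $L_{0X_1}(X_k)\cap S^1$ lying on the same side of $L(0,X_1)$ as $M_0$, let $N_{k+1}$ be the intersection point of the line $L(M_{k-1},X_k)$ with $S^1$ other than $M_{k-1}$, and let $X_{k+1}=L_{0X_1}(N_{k+1})\cap L(0,X_1)$. Then all $X_k$ lie on the radius of $\mathbb{B}^2$ through $X_1$ and $\rho_{\mathbb{B}^2}(0,X_k)=kc$ for every $k\ge1$.
   Context: $\mathbb{B}^2$ is the unit disk, $S^1$ the unit circle, $\rho_{\mathbb{B}^2}$ the hyperbolic distance given by $\sinh\frac{\rho_{\mathbb{B}^2}(x,y)}{2}=\frac{|x-y|}{\sqrt{1-|x|^2}\sqrt{1-|y|^2}}$. $L(p,q)$ is the line through $p,q$, and $L_{0X_1}(p)$ is the line through $p$ orthogonal to $L(0,X_1)$. *)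

theory Defs
  imports "HOL-Analysis.Analysis"
begin

text \<open>The plane is modelled by the complex numbers; the unit disk is ball 0 1 and S^1 is sphere 0 1.\<close>

definition hyp_dist :: "complex \<Rightarrow> complex \<Rightarrow> real" where
  "hyp_dist x y = 2 * arsinh (cmod (x - y) / (sqrt (1 - (cmod x)\<^sup>2) * sqrt (1 - (cmod y)\<^sup>2)))"

definition line :: "complex \<Rightarrow> complex \<Rightarrow> complex set" where
  "line p q = {p + of_real t * (q - p) | t. True}"

definition perp_line :: "complex \<Rightarrow> complex \<Rightarrow> complex \<Rightarrow> complex set" where
  "perp_line a b p = {z. inner (z - p) (b - a) = 0}"

definition same_side :: "complex \<Rightarrow> complex \<Rightarrow> complex \<Rightarrow> complex \<Rightarrow> bool" where
  "same_side a b u v \<longleftrightarrow> Im (cnj (b - a) * (u - a)) * Im (cnj (b - a) * (v - a)) > 0"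

definition radius_through :: "complex \<Rightarrow> complex set" where
  "radius_through x = {of_real t * (x / of_real (cmod x)) | t. 0 \<le> t \<and> t < 1}"

end

theory Submission
  imports Defs
begin

text \<open>Along the diameter through \<open>X\<^sub>1\<close>, the point at hyperbolic distance \<open>2s\<close> from 0 has
  Euclidean coordinate \<open>tanh s\<close>. If \<open>M\<close> is a point of the unit circle lying over the diameter
  point \<open>tanh \<alpha>\<close>, the chord from \<open>M\<close> through the diameter point \<open>tanh \<beta>\<close> meets the circle
  again over \<open>tanh (2\<beta> - \<alpha>)\<close>. Starting with \<open>M\<^sub>0\<close> over 0 and \<open>X\<^sub>1\<close> at \<open>tanh h\<close>, induction gives
  \<open>M\<^sub>k\<close> over \<open>tanh (kh)\<close> and \<open>X\<^sub>k\<^sub>+\<^sub>1\<close> at coordinate \<open>tanh ((k+1)h)\<close>, hence \<open>\<rho>(0, X\<^sub>k) = 2kh = kc\<close>.\<close>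

lemma tanh_artanh_real:
  fixes x :: real
  assumes "\<bar>x\<bar> < 1"
  shows "tanh (artanh x) = x"
proof -
  have pos: "1 + x > 0" "1 - x > 0" using assms by auto
  have "- 2 * artanh x = ln ((1 - x) / (1 + x))"
    using pos by (simp add: artanh_def ln_div)
  then have "exp (- 2 * artanh x) = (1 - x) / (1 + x)"
    using pos by simp
  then have "tanh (artanh x) = (1 - (1 - x) / (1 + x)) / (1 + (1 - x) / (1 + x))"
    by (simp only: tanh_real_altdef)
  then show ?thesis using pos by (simp add: divide_simps)
qed

lemma tanh_div_sqrt_one_minus_square: "tanh (y::real) / sqrt (1 - (tanh y)\<^sup>2) = sinh y"
proof -
  have "(cosh y)\<^sup>2 \<noteq> 0" by simp
  then have "1 - (tanh y)\<^sup>2 = (1 / cosh y)\<^sup>2"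
    using cosh_square_eq[of y] by (simp add: tanh_def power_divide divide_simps)
  then have "sqrt (1 - (tanh y)\<^sup>2) = 1 / cosh y" by simp
  then show ?thesis by (simp add: tanh_def)
qed

lemma hyp_dist_0_tanh:
  assumes "cmod u = 1"
  shows "hyp_dist 0 (of_real (tanh s) * u) = 2 * \<bar>s\<bar>"
proof -
  have "hyp_dist 0 (of_real (tanh s) * u) = 2 * arsinh (sinh \<bar>s\<bar>)"
    using assms tanh_div_sqrt_one_minus_square[of "\<bar>s\<bar>"]
    by (simp add: hyp_dist_def norm_mult flip: tanh_real_abs)
  then show ?thesis by (simp only: arsinh_sinh_real)
qed

lemma tanh_two_mul_diff:
  fixes \<alpha> \<beta> :: real
  shows "tanh (2 * \<beta> - \<alpha>) * (1 - 2 * tanh \<alpha> * tanh \<beta> + (tanh \<beta>)\<^sup>2)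
           = 2 * tanh \<beta> - tanh \<alpha> - tanh \<alpha> * (tanh \<beta>)\<^sup>2"
proof -
  define A where "A = exp (- 2 * \<alpha>)"
  define B where "B = exp (- 2 * \<beta>)"
  have pos: "A > 0" "B > 0" by (auto simp: A_def B_def)
  have "exp (- 2 * (2 * \<beta> - \<alpha>)) = B * B / A"
    by (simp add: A_def B_def flip: exp_add exp_diff)
  then have "tanh (2 * \<beta> - \<alpha>) = (1 - B * B / A) / (1 + B * B / A)"
    by (simp only: tanh_real_altdef)
  then have t: "tanh (2 * \<beta> - \<alpha>) = (A - B * B) / (A + B * B)"
    using pos by (simp add: divide_simps)
  have ta: "tanh \<alpha> = (1 - A) / (1 + A)" and tb: "tanh \<beta> = (1 - B) / (1 + B)"
    by (simp_all add: tanh_real_altdef A_def B_def)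
  have "1 + A > 0" "1 + B > 0" "A + B * B > 0" using pos by (auto simp: add_pos_pos)
  then show ?thesis unfolding t ta tb
    by (simp add: divide_simps power2_eq_square) (simp add: algebra_simps)
qed

lemma unit_circle_chord_through_real_point:
  fixes m n :: complex and x :: real
  assumes m: "cmod m = 1" and n: "cmod n = 1" and n_line: "n \<in> line m (of_real x)"
    and "n \<noteq> m"
  shows "1 - 2 * Re m * x + x\<^sup>2 \<noteq> 0
    \<and> Re n * (1 - 2 * Re m * x + x\<^sup>2) = 2 * x - Re m - Re m * x\<^sup>2"
proof -
  obtain t where n_eq: "n = m + of_real t * (of_real x - m)"
    using n_line by (auto simp: line_def)
  with \<open>n \<noteq> m\<close> have "t \<noteq> 0" by auto
  define a b where "a = Re m" and "b = Im m"
  have ab: "a\<^sup>2 + b\<^sup>2 = 1" using m by (simp add: a_def b_def cmod_def)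
  have n_coords: "Re n = a + t * (x - a)" "Im n = b - t * b"
    by (simp_all add: n_eq a_def b_def algebra_simps)
  have "(a + t * (x - a))\<^sup>2 + (b - t * b)\<^sup>2 = 1"
    using n by (simp add: cmod_def flip: n_coords)
  moreover have "(a + t * (x - a))\<^sup>2 + (b - t * b)\<^sup>2 - 1
      = t * (t * (1 - 2 * a * x + x\<^sup>2) - 2 * (1 - a * x)) + (a\<^sup>2 + b\<^sup>2 - 1) * (1 - t)\<^sup>2"
    by (simp add: power2_eq_square algebra_simps)
  ultimately have "t * (t * (1 - 2 * a * x + x\<^sup>2) - 2 * (1 - a * x)) = 0"
    using ab by simp
  then have t_eq: "t * (1 - 2 * a * x + x\<^sup>2) = 2 * (1 - a * x)"
    using \<open>t \<noteq> 0\<close> by simp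
  have D: "1 - 2 * a * x + x\<^sup>2 \<noteq> 0"
  proof
    assume "1 - 2 * a * x + x\<^sup>2 = 0"
    then have "(x - a)\<^sup>2 + b\<^sup>2 = 0" using ab by (simp add: power2_eq_square algebra_simps)
    then have "m = of_real x" by (simp add: a_def b_def complex_eq_iff)
    then show False using \<open>n \<noteq> m\<close> n_eq by simp
  qed
  have "Re n * (1 - 2 * a * x + x\<^sup>2) = a * (1 - 2 * a * x + x\<^sup>2) + (x - a) * (t * (1 - 2 * a * x + x\<^sup>2))"
    by (simp add: n_coords algebra_simps)
  also have "\<dots> = 2 * x - a - a * x\<^sup>2"
    unfolding t_eq by (simp add: algebra_simps power2_eq_square)
  finally show ?thesis using D by (simp add: a_def)
qed

lemma Re_cnj_mult_eq_inner: "Re (cnj u * z) = inner z u"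
  by (simp add: inner_complex_def)

lemma circle_chord_through_point_on_diameter:
  fixes u M N :: complex and x :: real
  assumes u: "cmod u = 1" and M: "cmod M = 1" and N: "cmod N = 1"
    and N_line: "N \<in> line M (of_real x * u)" and "N \<noteq> M"
  shows "1 - 2 * inner M u * x + x\<^sup>2 \<noteq> 0
    \<and> inner N u * (1 - 2 * inner M u * x + x\<^sup>2) = 2 * x - inner M u - inner M u * x\<^sup>2"
proof -
  have uu: "cnj u * u = 1" using u complex_norm_square[of u] by (simp add: mult.commute)
  have line': "cnj u * N \<in> line (cnj u * M) (of_real x)"
  proof -
    obtain t where N_eq: "N = M + of_real t * (of_real x * u - M)"
      using N_line by (auto simp: line_def)
    have "cnj u * N = cnj u * M + of_real t * (of_real x * (cnj u * u) - cnj u * M)"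
      unfolding N_eq by (simp add: algebra_simps)
    then show ?thesis using uu by (auto simp: line_def)
  qed
  have ne: "cnj u * N \<noteq> cnj u * M" using \<open>N \<noteq> M\<close> u by auto
  have norms: "cmod (cnj u * M) = 1" "cmod (cnj u * N) = 1" using u M N by (simp_all add: norm_mult)
  show ?thesis
    using unit_circle_chord_through_real_point[OF norms line' ne] unfolding Re_cnj_mult_eq_inner .
qed

lemma mem_perp_line_0_iff:
  assumes "r \<noteq> 0"
  shows "z \<in> perp_line 0 (of_real r * u) p \<longleftrightarrow> inner z u = inner p u"
  using assms by (simp add: perp_line_def inner_diff_left scaleR_conv_of_real[symmetric])

lemma mem_line_0_unit:
  assumes "cmod u = 1" and "z \<in> line 0 (of_real r * u)"
  shows "z = of_real (inner z u) * u"
proof -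
  obtain t where "z = of_real t * (of_real r * u)" using assms(2) by (auto simp: line_def)
  then have z: "z = of_real (t * r) * u" by simp
  have "inner u u = 1" using assms(1) by (simp add: power2_norm_eq_inner[symmetric])
  then show ?thesis by (simp add: z scaleR_conv_of_real[symmetric])
qed

lemma inner_of_real_mult_unit:
  assumes "cmod u = 1"
  shows "inner (of_real t * u) u = t"
  using assms by (simp add: scaleR_conv_of_real[symmetric] power2_norm_eq_inner[symmetric])

lemma circle_chord_tanh_step:
  fixes u M N :: complex and \<alpha> \<beta> :: real
  assumes u: "cmod u = 1" and M: "cmod M = 1" and N: "cmod N = 1"
    and M_coord: "inner M u = tanh \<alpha>"
    and N_line: "N \<in> line M (of_real (tanh \<beta>) * u)" and "N \<noteq> M"
  shows "inner N u = tanh (2 * \<beta> - \<alpha>)"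
proof -
  define D where "D = 1 - 2 * tanh \<alpha> * tanh \<beta> + (tanh \<beta>)\<^sup>2"
  note chord = circle_chord_through_point_on_diameter[OF u M N N_line \<open>N \<noteq> M\<close>]
  then have "D \<noteq> 0" by (simp add: D_def M_coord)
  from chord have "inner N u * D = 2 * tanh \<beta> - tanh \<alpha> - tanh \<alpha> * (tanh \<beta>)\<^sup>2"
    by (simp add: D_def M_coord)
  also have "\<dots> = tanh (2 * \<beta> - \<alpha>) * D"
    unfolding D_def by (rule tanh_two_mul_diff[symmetric])
  finally show ?thesis using \<open>D \<noteq> 0\<close> by simp
qed

lemma chord_construction_tanh:
  fixes X M N :: "nat \<Rightarrow> complex" and u :: complex and h :: real
  assumes u: "cmod u = 1"
    and X1: "X 1 = of_real (tanh h) * u"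
    and M0: "inner (M 0) u = 0"
    and M_sphere: "\<And>k. cmod (M k) = 1"
    and M_perp: "\<And>k. k \<ge> 1 \<Longrightarrow> inner (M k) u = inner (X k) u"
    and N: "\<And>k. k \<ge> 1 \<Longrightarrow>
      N (k + 1) \<in> line (M (k - 1)) (X k) \<and> cmod (N (k + 1)) = 1 \<and> N (k + 1) \<noteq> M (k - 1)"
    and X: "\<And>k. k \<ge> 1 \<Longrightarrow> X (k + 1) = of_real (inner (N (k + 1)) u) * u"
    and "k \<ge> 1"
  shows "X k = of_real (tanh (real k * h)) * u"
proof -
  have "inner (M j) u = tanh (real j * h) \<and> X (Suc j) = of_real (tanh (real (Suc j) * h)) * u" for j
  proof (induction j)
    case 0
    show ?case using M0 X1 by simp
  next
    case (Suc k)
    then have M_k: "inner (M k) u = tanh (real k * h)"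
      and X_k: "X (Suc k) = of_real (tanh (real (Suc k) * h)) * u" by simp_all
    have M_Suc: "inner (M (Suc k)) u = tanh (real (Suc k) * h)"
      using M_perp[of "Suc k"] by (simp add: X_k inner_of_real_mult_unit[OF u])
    have N_Suc: "N (Suc (Suc k)) \<in> line (M k) (of_real (tanh (real (Suc k) * h)) * u)"
      "cmod (N (Suc (Suc k))) = 1" "N (Suc (Suc k)) \<noteq> M k"
      using N[of "Suc k"] X_k by simp_all
    have "inner (N (Suc (Suc k))) u = tanh (2 * (real (Suc k) * h) - real k * h)"
      using circle_chord_tanh_step[OF u M_sphere N_Suc(2) M_k N_Suc(1,3)] .
    also have "2 * (real (Suc k) * h) - real k * h = real (Suc (Suc k)) * h"
      by (simp add: algebra_simps)
    finally have "X (Suc (Suc k)) = of_real (tanh (real (Suc (Suc k)) * h)) * u"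
      using X[of "Suc k"] by simp
    with M_Suc show ?case by simp
  qed
  then show ?thesis using \<open>k \<ge> 1\<close> by (cases k) auto
qed

theorem corollary4p4:
  fixes X M N :: "nat \<Rightarrow> complex" and c :: real
  assumes X1_disk: "X 1 \<in> ball 0 1" and X1_nz: "X 1 \<noteq> 0"
    and c_def: "c = hyp_dist 0 (X 1)"
    and M0: "M 0 \<in> perp_line 0 (X 1) 0 \<inter> sphere 0 1"
    and Mk: "\<And>k. k \<ge> 1 \<Longrightarrow> M k \<in> perp_line 0 (X 1) (X k) \<inter> sphere 0 1
                         \<and> same_side 0 (X 1) (M k) (M 0)"
    and Nk: "\<And>k. k \<ge> 1 \<Longrightarrow> N (k + 1) \<in> line (M (k - 1)) (X k) \<inter> sphere 0 1
                         \<and> N (k + 1) \<noteq> M (k - 1)"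
    and Xk: "\<And>k. k \<ge> 1 \<Longrightarrow> X (k + 1) \<in> perp_line 0 (X 1) (N (k + 1)) \<inter> line 0 (X 1)"
  shows "\<forall>k \<ge> 1. X k \<in> radius_through (X 1) \<and> hyp_dist 0 (X k) = real k * c"
proof -
  define u where "u = X 1 / of_real (cmod (X 1))"
  define h where "h = artanh (cmod (X 1))"
  have u: "cmod u = 1" using X1_nz by (simp add: u_def norm_divide)
  have tanh_h: "tanh h = cmod (X 1)" using X1_disk by (simp add: h_def tanh_artanh_real)
  then have "h > 0" using X1_nz by (metis tanh_real_pos_iff zero_less_norm_iff)
  have X1: "X 1 = of_real (tanh h) * u" using X1_nz by (simp add: u_def tanh_h)
  have perp: "z \<in> perp_line 0 (X 1) p \<longleftrightarrow> inner z u = inner p u" for z p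
    unfolding X1 using \<open>h > 0\<close> by (simp add: mem_perp_line_0_iff)
  have X_tanh: "X k = of_real (tanh (real k * h)) * u" if "k \<ge> 1" for k
  proof (rule chord_construction_tanh[where X = X and h = h, OF u X1 _ _ _ _ _ that])
    show "inner (M 0) u = 0" using M0 perp by simp
    show "cmod (M i) = 1" for i using M0 Mk[of i] by (cases "i = 0") auto
    show "inner (M i) u = inner (X i) u" if "i \<ge> 1" for i using Mk[OF that] perp by simp
    show "N (i + 1) \<in> line (M (i - 1)) (X i) \<and> cmod (N (i + 1)) = 1 \<and> N (i + 1) \<noteq> M (i - 1)"
      if "i \<ge> 1" for i using Nk[OF that] by simp
    show "X (i + 1) = of_real (inner (N (i + 1)) u) * u" if "i \<ge> 1" for i
    proof -
      have "X (i + 1) \<in> line 0 (of_real (tanh h) * u)" using Xk[OF that] by (simp flip: X1)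
      from mem_line_0_unit[OF u this] show ?thesis using Xk[OF that] perp by simp
    qed
  qed
  have c: "c = 2 * h" using c_def X1 hyp_dist_0_tanh[OF u] \<open>h > 0\<close> by simp
  show ?thesis
  proof (intro allI impI conjI)
    fix k :: nat assume "k \<ge> 1"
    have "0 \<le> tanh (real k * h)" using \<open>h > 0\<close> by simp
    then show "X k \<in> radius_through (X 1)"
      unfolding radius_through_def X_tanh[OF \<open>k \<ge> 1\<close>] u_def
      using tanh_real_lt_1 by blast
    show "hyp_dist 0 (X k) = real k * c"
      using X_tanh[OF \<open>k \<ge> 1\<close>] hyp_dist_0_tanh[OF u] c \<open>h > 0\<close> by simp
  qed
qed

end
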